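(* Let $k\ge2$ and $m\ge1$ be integers and consider any realization of the random $k$-tree $G(m)$. For an edge $e$ of $G(m)$ let $N(e)$ be the number of $k$-cliques of $G(m)$ containing $e$. Let $F$ be the spanning forest of $G(m)$ defined as follows: for each $1\le t\le m$, if the vertex $x$ born in round $t$ was joined to the $k$-clique $C$, then in $F$ the vertex $x$ is joined to a vertex $u\in V(C)$ with $N(xu)=\max_{v\in V(C)}N(xv)$ (ties broken arbitrarily). If $xy\in E(F)$, $x$ is born later than $y$, and the degree of $x$ in $G(m)$ is greater than $2k-2$, then $N(xy)\ge (k^2-k)/2$.
   Context: Random $k$-tree process: $G(0)$ is a clique on $k$ vertices (born in round $0$); for $t\ge1$, $G(t)$ is obtained from $G(t-1)$ by choosing a $k$-clique of $G(t-1)$ uniformly at random, creating a new vertex (born in round $t$), and joining it to all vertices of the chosen clique. *)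

theory Defs
  imports Complex_Main
begin

text \<open>The initial clique has vertices 0..k-1 (born in round 0);
the vertex born in round t (t \<ge> 1) is k + t - 1. C t is the k-clique chosen in round t.\<close>

fun ktree_edges :: "nat \<Rightarrow> (nat \<Rightarrow> nat set) \<Rightarrow> nat \<Rightarrow> nat set set" where
  "ktree_edges k C 0 = {{a, b} | a b. a < k \<and> b < k \<and> a \<noteq> b}"
| "ktree_edges k C (Suc t) = ktree_edges k C t \<union> {{k + t, v} | v. v \<in> C (Suc t)}"

definition ktree_vertices :: "nat \<Rightarrow> nat \<Rightarrow> nat set" where
  "ktree_vertices k t = {..<k + t}"

definition is_kclique :: "nat \<Rightarrow> nat set \<Rightarrow> nat set set \<Rightarrow> nat set \<Rightarrow> bool" where
  "is_kclique k V E S \<longleftrightarrow> S \<subseteq> V \<and> card S = k \<and> (\<forall>a\<in>S. \<forall>b\<in>S. a \<noteq> b \<longrightarrow> {a, b} \<in> E)"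

definition ktree_realization :: "nat \<Rightarrow> nat \<Rightarrow> (nat \<Rightarrow> nat set) \<Rightarrow> bool" where
  "ktree_realization k m C \<longleftrightarrow>
     (\<forall>t\<in>{1..m}. is_kclique k (ktree_vertices k (t - 1)) (ktree_edges k C (t - 1)) (C t))"

definition Ncl :: "nat \<Rightarrow> (nat \<Rightarrow> nat set) \<Rightarrow> nat \<Rightarrow> nat set \<Rightarrow> nat" where
  "Ncl k C m e = card {S. is_kclique k (ktree_vertices k m) (ktree_edges k C m) S \<and> e \<subseteq> S}"

definition birth :: "nat \<Rightarrow> nat \<Rightarrow> nat" where
  "birth k x = (if x < k then 0 else x - k + 1)"

definition ktree_degree :: "nat \<Rightarrow> (nat \<Rightarrow> nat set) \<Rightarrow> nat \<Rightarrow> nat \<Rightarrow> nat" where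
  "ktree_degree k C m x = card {v. {x, v} \<in> ktree_edges k C m}"

text \<open>p t is the vertex of C t to which the vertex born in round t is joined in F
(a maximiser of N, ties broken arbitrarily).\<close>
definition forest_parent_ok :: "nat \<Rightarrow> nat \<Rightarrow> (nat \<Rightarrow> nat set) \<Rightarrow> (nat \<Rightarrow> nat) \<Rightarrow> bool" where
  "forest_parent_ok k m C p \<longleftrightarrow>
     (\<forall>t\<in>{1..m}. p t \<in> C t \<and>
        Ncl k C m {k + t - 1, p t} = Max ((\<lambda>v. Ncl k C m {k + t - 1, v}) ` C t))"

definition forest_edges :: "nat \<Rightarrow> nat \<Rightarrow> (nat \<Rightarrow> nat) \<Rightarrow> nat set set" where
  "forest_edges k m p = {{k + t - 1, p t} | t. t \<in> {1..m}}"

end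

theory Submission
  imports Defs
begin

text \<open>Let x be born in round t with parent clique C t, and call a later round s a child round
of x if x \<in> C s. Every neighbour of x is in C t or born in a child round, so the degree bound
gives at least k - 1 child rounds. The clique of the j-th child round (counting from 0) shares
at least k - 1 - j vertices with C t, since its other vertices besides x are children of x born
earlier. Hence the child cliques meet C t in at least k(k-1)/2 vertices in total.

For u \<in> C t, the k-cliques containing x and u include the k - 1 cliques obtained from
{x} \<union> C t by dropping a vertex other than u, and k - 2 further ones for each child round whose
clique contains u. Summing over u \<in> C t gives \<Sum>u N(xu) \<ge> k(k-1) + (k-2) k(k-1)/2 = k \<cdot> k(k-1)/2,
and the parent y maximises N(xu).\<close>

lemma sum_rank_eq:
  fixes S :: "'a::linorder set"
  assumes "finite S"
  shows "(\<Sum>s\<in>S. g (card {s'\<in>S. s' < s})) = (\<Sum>j<card S. g j)"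
  using assms
proof (induction S rule: finite_linorder_max_induct)
  case empty
  then show ?case by simp
next
  case (insert a S)
  have "(\<Sum>s\<in>insert a S. g (card {s'\<in>insert a S. s' < s})) =
      g (card {s'\<in>insert a S. s' < a}) + (\<Sum>s\<in>S. g (card {s'\<in>insert a S. s' < s}))"
    using insert by (intro sum.insert) auto
  moreover have "{s'\<in>insert a S. s' < a} = S"
    using insert by auto
  moreover have "{s'\<in>insert a S. s' < s} = {s'\<in>S. s' < s}" if "s \<in> S" for s
    using insert that by auto
  moreover have "card (insert a S) = Suc (card S)"
    using insert by auto
  ultimately show ?case
    using insert by (simp add: lessThan_Suc add.commute)
qed

lemma sum_lessThan_diff_le_sum_by_rank:
  fixes S :: "'a::linorder set" and f :: "'a \<Rightarrow> nat"
  assumes "finite S" and "n \<le> card S"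
    and "\<And>s. s \<in> S \<Longrightarrow> n - card {s'\<in>S. s' < s} \<le> f s"
  shows "(\<Sum>j<n. n - j) \<le> (\<Sum>s\<in>S. f s)"
proof -
  have "(\<Sum>j<n. n - j) \<le> (\<Sum>j<card S. n - j)"
    using assms(2) by (intro sum_mono2) auto
  also have "\<dots> = (\<Sum>s\<in>S. n - card {s'\<in>S. s' < s})"
    using sum_rank_eq[OF assms(1), of "\<lambda>j. n - j"] by simp
  also have "\<dots> \<le> (\<Sum>s\<in>S. f s)"
    using assms(3) by (intro sum_mono) auto
  finally show ?thesis .
qed

lemma double_sum_lessThan_diff: "2 * (\<Sum>j<n. n - j) = n * (n + 1 :: nat)"
proof (induction n)
  case 0
  then show ?case by simp
next
  case (Suc n)
  have "(\<Sum>j<Suc n. Suc n - j) = (\<Sum>j<n. (n - j) + 1) + 1"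
    by (simp add: Suc_diff_le)
  also have "\<dots> = (\<Sum>j<n. n - j) + n + 1"
    by (simp only: sum.distrib) simp
  finally show ?case
    using Suc by simp
qed

lemma sum_card_incidence_swap:
  assumes "finite A" and "finite S"
  shows "(\<Sum>u\<in>A. card {s\<in>S. u \<in> F s}) = (\<Sum>s\<in>S. card (F s \<inter> A))"
proof -
  have "(\<Sum>u\<in>A. card {s\<in>S. u \<in> F s}) = (\<Sum>u\<in>A. \<Sum>s\<in>S. if u \<in> F s then 1 else 0)"
    using assms(2) by (simp add: sum.If_cases Int_def)
  also have "\<dots> = (\<Sum>s\<in>S. \<Sum>u\<in>A. if u \<in> F s then 1 else 0)"
    by (rule sum.swap)
  also have "\<dots> = (\<Sum>s\<in>S. card (F s \<inter> A))"
    using assms(1) by (simp add: sum.If_cases Int_commute)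
  finally show ?thesis .
qed

lemma ktree_edges_mono: "a \<le> b \<Longrightarrow> ktree_edges k C a \<subseteq> ktree_edges k C b"
  by (induction b) (auto simp: le_Suc_eq)

lemma ktree_edges_newborn:
  assumes "1 \<le> s" and "v \<in> C s"
  shows "{k + s - 1, v} \<in> ktree_edges k C s"
proof -
  obtain s' where "s = Suc s'"
    using assms(1) by (cases s) auto
  then show ?thesis
    using assms(2) by auto
qed

lemma ktree_edges_cases:
  "{x, v} \<in> ktree_edges k C n \<Longrightarrow> (x < k \<and> v < k) \<or>
     (\<exists>s\<in>{1..n}. (x = k + s - 1 \<and> v \<in> C s) \<or> (v = k + s - 1 \<and> x \<in> C s))"
proof (induction n)
  case 0
  then show ?case by (auto simp: doubleton_eq_iff)
next
  case (Suc n)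
  show ?case
  proof (cases "{x, v} \<in> ktree_edges k C n")
    case True
    with Suc.IH show ?thesis
      by (meson atLeastAtMost_iff le_Suc_eq)
  next
    case False
    with Suc.prems obtain w where "{x, v} = {k + n, w}" "w \<in> C (Suc n)"
      by auto
    then have "(x = k + Suc n - 1 \<and> v \<in> C (Suc n)) \<or> (v = k + Suc n - 1 \<and> x \<in> C (Suc n))"
      by (auto simp: doubleton_eq_iff)
    moreover have "Suc n \<in> {1..Suc n}"
      by simp
    ultimately show ?thesis
      by blast
  qed
qed

locale ktree_realized =
  fixes k m :: nat and C :: "nat \<Rightarrow> nat set"
  assumes realization: "ktree_realization k m C"
begin

lemma chosen_clique:
  assumes "s \<in> {1..m}"
  shows chosen_clique_older: "C s \<subseteq> {..<k + s - 1}"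
    and card_chosen_clique: "card (C s) = k"
    and chosen_clique_edge: "\<And>a b. a \<in> C s \<Longrightarrow> b \<in> C s \<Longrightarrow> a \<noteq> b \<Longrightarrow>
          {a, b} \<in> ktree_edges k C (s - 1)"
proof -
  have "k + (s - 1) = k + s - 1"
    using assms by auto
  then show "C s \<subseteq> {..<k + s - 1}" "card (C s) = k"
    "\<And>a b. a \<in> C s \<Longrightarrow> b \<in> C s \<Longrightarrow> a \<noteq> b \<Longrightarrow> {a, b} \<in> ktree_edges k C (s - 1)"
    using realization assms
    unfolding ktree_realization_def is_kclique_def ktree_vertices_def by metis+
qed

lemma finite_chosen_clique: "s \<in> {1..m} \<Longrightarrow> finite (C s)"
  using chosen_clique_older finite_subset by blast

definition child_rounds :: "nat \<Rightarrow> nat \<Rightarrow> nat set" where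
  "child_rounds n t = {s\<in>{t<..n}. k + t - 1 \<in> C s}"

lemma finite_child_rounds: "finite (child_rounds n t)"
  unfolding child_rounds_def by auto

lemma neighbours_newborn_subset:
  assumes "t \<in> {1..m}" and "n \<le> m"
  shows "{v. {k + t - 1, v} \<in> ktree_edges k C n} \<subseteq> C t \<union> (\<lambda>s. k + s - 1) ` child_rounds n t"
proof
  fix v
  assume "v \<in> {v. {k + t - 1, v} \<in> ktree_edges k C n}"
  then obtain s where s: "s \<in> {1..n}"
    and "(k + t - 1 = k + s - 1 \<and> v \<in> C s) \<or> (v = k + s - 1 \<and> k + t - 1 \<in> C s)"
    using ktree_edges_cases assms(1) by fastforce
  moreover have "s = t" if "k + t - 1 = k + s - 1"
    using that s assms(1) by auto
  ultimately consider "s = t" "v \<in> C t" | "v = k + s - 1" "k + t - 1 \<in> C s"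
    by blast
  then show "v \<in> C t \<union> (\<lambda>s. k + s - 1) ` child_rounds n t"
  proof cases
    case 2
    have "k + t - 1 < k + s - 1"
      using chosen_clique_older[of s] s assms 2 by auto
    then have "s \<in> child_rounds n t"
      using s 2 unfolding child_rounds_def by auto
    then show ?thesis
      using 2 by auto
  qed simp
qed

lemma degree_newborn_le:
  assumes "t \<in> {1..m}"
  shows "ktree_degree k C m (k + t - 1) \<le> k + card (child_rounds m t)"
proof -
  have "ktree_degree k C m (k + t - 1) \<le> card (C t \<union> (\<lambda>s. k + s - 1) ` child_rounds m t)"
    unfolding ktree_degree_def using assms neighbours_newborn_subset[OF assms order_refl]
    by (intro card_mono) (auto simp: finite_chosen_clique finite_child_rounds)
  also have "\<dots> \<le> card (C t) + card ((\<lambda>s. k + s - 1) ` child_rounds m t)"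
    by (rule card_Un_le)
  also have "\<dots> \<le> k + card (child_rounds m t)"
    using assms card_chosen_clique card_image_le[OF finite_child_rounds] by auto
  finally show ?thesis .
qed

lemma child_clique_overlap:
  assumes t: "t \<in> {1..m}" and s: "s \<in> child_rounds m t"
  shows "k - 1 \<le> card (C s \<inter> C t) + card {s'\<in>child_rounds m t. s' < s}"
proof -
  let ?x = "k + t - 1"
  have s1: "s \<in> {1..m}" and xs: "?x \<in> C s"
    using s t unfolding child_rounds_def by auto
  have earlier: "child_rounds (s - 1) t = {s'\<in>child_rounds m t. s' < s}"
    using s1 unfolding child_rounds_def by auto
  have "s - 1 \<le> m"
    using s1 by auto
  have "C s - {?x} \<subseteq> {v. {?x, v} \<in> ktree_edges k C (s - 1)}"
    using chosen_clique_edge[OF s1] xs by auto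
  also have "\<dots> \<subseteq> C t \<union> (\<lambda>s'. k + s' - 1) ` {s'\<in>child_rounds m t. s' < s}"
    using neighbours_newborn_subset[OF t \<open>s - 1 \<le> m\<close>] unfolding earlier .
  finally have "C s - {?x} \<subseteq> (C s \<inter> C t) \<union> (\<lambda>s'. k + s' - 1) ` {s'\<in>child_rounds m t. s' < s}"
    by blast
  then have "card (C s - {?x}) \<le> card ((C s \<inter> C t) \<union> (\<lambda>s'. k + s' - 1) ` {s'\<in>child_rounds m t. s' < s})"
    using finite_chosen_clique[OF s1] finite_child_rounds by (intro card_mono) auto
  also have "\<dots> \<le> card (C s \<inter> C t) + card {s'\<in>child_rounds m t. s' < s}"
    by (rule order_trans[OF card_Un_le add_left_mono[OF card_image_le]]) (simp add: finite_child_rounds)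
  finally have "card (C s - {?x}) \<le> card (C s \<inter> C t) + card {s'\<in>child_rounds m t. s' < s}" .
  moreover have "card (C s - {?x}) = k - 1"
    using card_chosen_clique[OF s1] xs finite_chosen_clique[OF s1] by auto
  ultimately show ?thesis by simp
qed

lemma sum_child_clique_overlap:
  assumes "t \<in> {1..m}" and "k - 1 \<le> card (child_rounds m t)"
  shows "(\<Sum>j<k - 1. k - 1 - j) \<le> (\<Sum>s\<in>child_rounds m t. card (C s \<inter> C t))"
proof (rule sum_lessThan_diff_le_sum_by_rank[OF finite_child_rounds assms(2)])
  fix s
  assume "s \<in> child_rounds m t"
  then show "k - 1 - card {s'\<in>child_rounds m t. s' < s} \<le> card (C s \<inter> C t)"
    using child_clique_overlap[OF assms(1)] by (meson le_diff_conv)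
qed

lemma swap_into_clique:
  assumes s: "s \<in> {1..m}" and w: "w \<in> C s"
  shows "is_kclique k (ktree_vertices k m) (ktree_edges k C m) (insert (k + s - 1) (C s - {w}))"
proof -
  let ?Z = "insert (k + s - 1) (C s - {w})"
  have fin: "finite (C s)" and card: "card (C s) = k" and older: "C s \<subseteq> {..<k + s - 1}"
    using s finite_chosen_clique card_chosen_clique chosen_clique_older by auto
  have "k + s - 1 \<notin> C s - {w}"
    using older by auto
  then have "card ?Z = Suc (card (C s - {w}))"
    using fin by simp
  also have "\<dots> = card (C s)"
    using fin w card_Suc_Diff1 by metis
  finally have "card ?Z = k"
    using card by simp
  moreover have "?Z \<subseteq> ktree_vertices k m"
    using older s unfolding ktree_vertices_def by auto
  moreover have "{a, b} \<in> ktree_edges k C m" if ab: "a \<in> ?Z" "b \<in> ?Z" "a \<noteq> b" for a b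
  proof -
    have old: "ktree_edges k C (s - 1) \<subseteq> ktree_edges k C m"
      using s by (intro ktree_edges_mono) auto
    have cur: "ktree_edges k C s \<subseteq> ktree_edges k C m"
      using s by (intro ktree_edges_mono) auto
    have new_edge: "{k + s - 1, v} \<in> ktree_edges k C m" if "v \<in> C s" for v
      using ktree_edges_newborn[of s v C k] s that cur by auto
    consider "a = k + s - 1" "b \<in> C s" | "b = k + s - 1" "a \<in> C s" | "a \<in> C s" "b \<in> C s"
      using ab by blast
    then show ?thesis
    proof cases
      case 1
      then show ?thesis using new_edge by simp
    next
      case 2
      then show ?thesis using new_edge[of a] by (simp add: insert_commute)
    next
      case 3
      then show ?thesis using chosen_clique_edge[OF s] ab(3) old by blast
    qed
  qed
  ultimately show ?thesis
    unfolding is_kclique_def by blast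
qed

lemma inj_on_swap_into_clique:
  "inj_on (\<lambda>(s, w). insert (k + s - 1) (C s - {w})) (SIGMA s:{1..m}. C s)"
proof (rule inj_onI, clarify)
  fix s w s' w'
  assume s: "s \<in> {1..m}" "w \<in> C s" and s': "s' \<in> {1..m}" "w' \<in> C s'"
    and eq: "insert (k + s - 1) (C s - {w}) = insert (k + s' - 1) (C s' - {w'})"
  \<comment> \<open>The vertex born in round s is the largest vertex of the swapped clique, so it determines s.\<close>
  have "\<forall>z\<in>insert (k + r - 1) (C r - {v}). z \<le> k + r - 1" if "r \<in> {1..m}" for r v
    using chosen_clique_older[OF that] by auto
  then have "k + s - 1 \<le> k + s' - 1" "k + s' - 1 \<le> k + s - 1"
    using eq s s' by (metis insertI1)+
  then have ss: "s' = s"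
    using s s' by auto
  have "k + s - 1 \<notin> C s"
    using chosen_clique_older[OF s(1)] by auto
  then have "C s - {w} = C s - {w'}"
    using eq unfolding ss by (metis Diff_iff insert_Diff1 insert_absorb2 insert_iff insert_ident)
  then show "s = s' \<and> w = w'"
    using s s' ss by auto
qed

lemma finite_cliques: "finite {S. is_kclique k (ktree_vertices k m) (ktree_edges k C m) S \<and> e \<subseteq> S}"
  by (rule finite_subset[of _ "Pow {..<k + m}"]) (auto simp: is_kclique_def ktree_vertices_def)

lemma Ncl_newborn_lower:
  assumes t: "t \<in> {1..m}" and u: "u \<in> C t"
  shows "(k - 1) + (k - 2) * card {s\<in>child_rounds m t. u \<in> C s} \<le> Ncl k C m {k + t - 1, u}"
proof -
  let ?x = "k + t - 1"
  let ?swap = "\<lambda>(s, w). insert (k + s - 1) (C s - {w})"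
  define R where "R = {s\<in>child_rounds m t. u \<in> C s}"
  \<comment> \<open>Swapping out a vertex other than x and u keeps both in the clique.\<close>
  define I where "I = (SIGMA s:insert t R. C s - {?x, u})"
  have R: "R \<subseteq> {1..m}" "finite R" "t \<notin> R"
    using t finite_child_rounds unfolding R_def child_rounds_def by auto
  have xu: "?x \<notin> C t" "?x \<noteq> u"
    using u chosen_clique_older[OF t] by auto
  have "C t - {?x, u} = C t - {u}"
    using xu by auto
  then have card_t: "card (C t - {?x, u}) = k - 1"
    using u card_chosen_clique[OF t] finite_chosen_clique[OF t] by simp
  have card_R: "card (C s - {?x, u}) = k - 2" if "s \<in> R" for s
  proof -
    have s: "s \<in> {1..m}" and "?x \<in> C s" "u \<in> C s"
      using that t unfolding R_def child_rounds_def by auto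
    then have "card (C s - {?x, u}) = card (C s) - card {?x, u}"
      using finite_chosen_clique[OF s] by (intro card_Diff_subset) auto
    then show ?thesis
      using card_chosen_clique[OF s] xu(2) by simp
  qed
  have "card I = (\<Sum>s\<in>insert t R. card (C s - {?x, u}))"
    unfolding I_def using R t finite_chosen_clique by (intro card_SigmaI) auto
  also have "\<dots> = (k - 1) + (k - 2) * card R"
    using R card_t card_R by simp
  finally have card_I: "card I = (k - 1) + (k - 2) * card R" .
  have "I \<subseteq> (SIGMA s:{1..m}. C s)"
    using R t unfolding I_def by auto
  then have "card I = card (?swap ` I)"
    by (rule card_image[symmetric, OF inj_on_subset[OF inj_on_swap_into_clique]])
  also have "\<dots> \<le> Ncl k C m {?x, u}"
    unfolding Ncl_def
  proof (intro card_mono[OF finite_cliques] subsetI)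
    fix Z
    assume "Z \<in> ?swap ` I"
    then obtain s w where s: "s \<in> insert t R" "w \<in> C s" "w \<notin> {?x, u}"
      and Z: "Z = insert (k + s - 1) (C s - {w})"
      unfolding I_def by auto
    have "s \<in> {1..m}"
      using s(1) R t by auto
    then have "is_kclique k (ktree_vertices k m) (ktree_edges k C m) Z"
      unfolding Z using s(2) by (rule swap_into_clique)
    moreover have "{?x, u} \<subseteq> Z"
      using s Z u unfolding R_def child_rounds_def by auto
    ultimately show "Z \<in> {S. is_kclique k (ktree_vertices k m) (ktree_edges k C m) S \<and> {?x, u} \<subseteq> S}"
      by blast
  qed
  finally show ?thesis
    using card_I unfolding R_def by simp
qed

lemma parent_Ncl_lower:
  assumes k: "k \<ge> 2" and t: "t \<in> {1..m}" and y: "y \<in> C t"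
    and max: "Ncl k C m {k + t - 1, y} = Max ((\<lambda>v. Ncl k C m {k + t - 1, v}) ` C t)"
    and deg: "ktree_degree k C m (k + t - 1) > 2 * k - 2"
  shows "k * (k - 1) \<le> 2 * Ncl k C m {k + t - 1, y}"
proof -
  let ?N = "Ncl k C m {k + t - 1, y}"
  let ?ch = "child_rounds m t"
  define T where "T = (\<Sum>j<k - 1. k - 1 - j)"
  have "k - 1 \<le> card ?ch"
    using degree_newborn_le[OF t] deg by linarith
  then have overlap: "T \<le> (\<Sum>s\<in>?ch. card (C s \<inter> C t))"
    unfolding T_def using sum_child_clique_overlap[OF t] by blast
  have "k * (k - 1) + (k - 2) * (\<Sum>s\<in>?ch. card (C s \<inter> C t))
      = (\<Sum>u\<in>C t. k - 1) + (k - 2) * (\<Sum>u\<in>C t. card {s\<in>?ch. u \<in> C s})"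
    using card_chosen_clique[OF t] sum_card_incidence_swap[OF finite_chosen_clique[OF t] finite_child_rounds]
    by simp
  also have "\<dots> = (\<Sum>u\<in>C t. (k - 1) + (k - 2) * card {s\<in>?ch. u \<in> C s})"
    by (simp add: sum.distrib sum_distrib_left)
  also have "\<dots> \<le> (\<Sum>u\<in>C t. Ncl k C m {k + t - 1, u})"
    using Ncl_newborn_lower[OF t] by (intro sum_mono)
  also have "\<dots> \<le> (\<Sum>u\<in>C t. ?N)"
    using max finite_chosen_clique[OF t] by (intro sum_mono) auto
  also have "\<dots> = k * ?N"
    using card_chosen_clique[OF t] by simp
  finally have "k * (k - 1) + (k - 2) * (\<Sum>s\<in>?ch. card (C s \<inter> C t)) \<le> k * ?N" .
  then have "k * (k - 1) + (k - 2) * T \<le> k * ?N"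
    using overlap mult_le_mono2 by (meson add_le_cancel_left order_trans)
  then have "2 * (k * (k - 1)) + (k - 2) * (2 * T) \<le> k * (2 * ?N)"
    by simp
  moreover have "2 * T = k * (k - 1)"
    using double_sum_lessThan_diff[of "k - 1"] k unfolding T_def by simp
  moreover have "k * (k * (k - 1)) = 2 * (k * (k - 1)) + (k - 2) * (k * (k - 1))"
    using k by (metis add_mult_distrib le_add_diff_inverse)
  ultimately have "k * (k * (k - 1)) \<le> k * (2 * ?N)"
    by simp
  then show ?thesis
    using k by simp
qed

end

lemma forest_edge_newborn:
  assumes "{x, y} \<in> forest_edges k m p" and "forest_parent_ok k m C p"
    and "ktree_realization k m C" and "birth k x > birth k y"
  obtains t where "t \<in> {1..m}" "x = k + t - 1" "y = p t"
proof -
  obtain t where t: "t \<in> {1..m}" "{x, y} = {k + t - 1, p t}"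
    using assms(1) unfolding forest_edges_def by auto
  have "p t \<in> C t"
    using assms(2) t(1) unfolding forest_parent_ok_def by auto
  then have "p t < k + t - 1"
    using ktree_realized.chosen_clique_older[OF ktree_realized.intro[OF assms(3)] t(1)] by auto
  then have "birth k (p t) < birth k (k + t - 1)"
    using t(1) unfolding birth_def by auto
  then have "x = k + t - 1 \<and> y = p t"
    using t(2) assms(4) by (auto simp: doubleton_eq_iff)
  then show thesis
    using that t(1) by blast
qed

theorem lemma5:
  fixes k m :: nat and C :: "nat \<Rightarrow> nat set" and p :: "nat \<Rightarrow> nat" and x y :: nat
  assumes "k \<ge> 2" and "m \<ge> 1"
    and "ktree_realization k m C"
    and "forest_parent_ok k m C p"
    and "{x, y} \<in> forest_edges k m p"
    and "birth k x > birth k y"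
    and "ktree_degree k C m x > 2 * k - 2"
  shows "real (Ncl k C m {x, y}) \<ge> (real k ^ 2 - real k) / 2"
proof -
  interpret ktree_realized k m C
    using assms(3) by unfold_locales
  obtain t where t: "t \<in> {1..m}" and x: "x = k + t - 1" and y: "y = p t"
    using forest_edge_newborn[OF assms(5,4,3,6)] .
  have "p t \<in> C t"
    and "Ncl k C m {k + t - 1, p t} = Max ((\<lambda>v. Ncl k C m {k + t - 1, v}) ` C t)"
    using assms(4) t unfolding forest_parent_ok_def by auto
  from parent_Ncl_lower[OF assms(1) t this] have "k * (k - 1) \<le> 2 * Ncl k C m {x, y}"
    using assms(7) unfolding x y by simp
  then have "real (k * (k - 1)) \<le> real (2 * Ncl k C m {x, y})"
    by (simp only: of_nat_le_iff)
  moreover have "real (k * (k - 1)) = real k ^ 2 - real k"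
    using assms(1) by (simp add: of_nat_diff power2_eq_square algebra_simps)
  ultimately show ?thesis
    by simp
qed

end
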